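(* Let $\varphi_{-(n+2)}^{l}:=\sqrt{\tfrac{2n+1}{2n+3}}\,\mathcal{K}(\varphi_{n}^{l})$ for $n\in\mathbb{N}_0$, $l=0,\ldots,n$. Then: (i) for all $n\in\mathbb{N}_0$ and $l=0,\ldots,n$, $$\partial_{0}\,\varphi_{-(n+2)}^{l}=-\sqrt{\frac{(2n+1)(n-l+1)(n+l+2)}{2n+3}}\;\varphi_{-(n+3)}^{l};$$ (ii) for all $n\in\mathbb{N}$ and $l=0,\ldots,n-1$, the function $$\mathcal{P}\varphi_{-(n+2)}^{l}:=-\sqrt{\frac{2n+1}{(2n-1)(n-l)(n+l+1)}}\;\varphi_{-(n+1)}^{l}$$ is monogenic in $\mathbb{R}^3\setminus\{0\}$ and satisfies $\partial_{0}\big[\mathcal{P}\varphi_{-(n+2)}^{l}\big]=\varphi_{-(n+2)}^{l}$.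
   Context: $\mathbb{H}$: real quaternions with basis $\mathbf{e}_0=1,\mathbf{e}_1,\mathbf{e}_2,\mathbf{e}_3$, $\mathbf{e}_i\mathbf{e}_j+\mathbf{e}_j\mathbf{e}_i=-2\delta_{ij}$ ($i,j=1,2,3$), $\mathbf{e}_1\mathbf{e}_2=\mathbf{e}_3$. A point $(x_0,x_1,x_2)\in\mathbb{R}^3$ is identified with $\mathbf{x}=x_0+x_1\mathbf{e}_1+x_2\mathbf{e}_2$, $\overline{\mathbf{x}}=x_0-x_1\mathbf{e}_1-x_2\mathbf{e}_2$. Operators act from the left: $\bar\partial=\partial_{x_0}+\mathbf{e}_1\partial_{x_1}+\mathbf{e}_2\partial_{x_2}$, $\partial=\partial_{x_0}-\mathbf{e}_1\partial_{x_1}-\mathbf{e}_2\partial_{x_2}$; $f$ is monogenic if $\bar\partial f=0$, and the hypercomplex derivative of a monogenic $f$ is $\partial_0 f:=\tfrac12\partial f$. Kelvin transformation: $\mathcal{K}(P)(\mathbf{x})=\frac{\overline{\mathbf{x}}}{|\mathbf{x}|^3}P\big(\frac{\overline{\mathbf{x}}}{|\mathbf{x}|^2}\big)$. Spherical coordinates: $x_0=r\cos\theta$, $x_1=r\sin\theta\cos\varphi$, $x_2=r\sin\theta\sin\varphi$. With Legendre polynomials $P_k$ and $P_k^m(t)=(1-t^2)^{m/2}\frac{d^m}{dt^m}P_k(t)$ ($P_k^m=0$ for $m>k$), put $\mathcal{A}^{m,n}(\theta)=\tfrac12\big(\sin^2\theta\,\tfrac{d}{dt}[P_{n+1}^m(t)]_{t=\cos\theta}+(n+1)\cos\theta\,P_{n+1}^m(\cos\theta)\big)$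 and, for $n\in\mathbb{N}_0$, $l=0,\ldots,n$, $$A_n^l(\mathbf{x})=\frac{2^{l+1}n!\,r^n}{(n+l+2)!}\Big[(n+l+2)\mathcal{A}^{l,n}(\theta)\big(\cos l\varphi-\sin l\varphi\,\mathbf{e}_3\big)+\mathcal{A}^{l+1,n}(\theta)\big(\cos((l+1)\varphi)\mathbf{e}_1+\sin((l+1)\varphi)\mathbf{e}_2\big)\Big],$$ and $\varphi_n^l:=\frac{1}{2^{l+1}n!}\sqrt{\frac{(2n+3)(n-l)!(n+l+1)!}{\pi}}\,A_n^l$ (homogeneous monogenic polynomials forming an orthonormal basis of the square-integrable monogenic functions on the open unit ball). *)

theory Defs
  imports "HOL-Analysis.Analysis" "HOL-Computational_Algebra.Polynomial"
begin

datatype quat = Quat (q0: real) (q1: real) (q2: real) (q3: real)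

definition qadd :: "quat \<Rightarrow> quat \<Rightarrow> quat" where
  "qadd a b = Quat (q0 a + q0 b) (q1 a + q1 b) (q2 a + q2 b) (q3 a + q3 b)"

definition qscale :: "real \<Rightarrow> quat \<Rightarrow> quat" where
  "qscale c a = Quat (c * q0 a) (c * q1 a) (c * q2 a) (c * q3 a)"

text \<open>Hamilton product: e_i e_j + e_j e_i = -2 delta_ij, e1 e2 = e3.\<close>
definition qmul :: "quat \<Rightarrow> quat \<Rightarrow> quat" where
  "qmul a b = Quat
     (q0 a * q0 b - q1 a * q1 b - q2 a * q2 b - q3 a * q3 b)
     (q0 a * q1 b + q1 a * q0 b + q2 a * q3 b - q3 a * q2 b)
     (q0 a * q2 b - q1 a * q3 b + q2 a * q0 b + q3 a * q1 b)
     (q0 a * q3 b + q1 a * q2 b - q2 a * q1 b + q3 a * q0 b)"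

definition qzero :: quat where "qzero = Quat 0 0 0 0"
definition qe1 :: quat where "qe1 = Quat 0 1 0 0"
definition qe2 :: quat where "qe2 = Quat 0 0 1 0"

type_synonym pt = "real \<times> real \<times> real"

definition pnorm :: "pt \<Rightarrow> real" where
  "pnorm x = sqrt ((fst x)\<^sup>2 + (fst (snd x))\<^sup>2 + (snd (snd x))\<^sup>2)"

definition pquat :: "pt \<Rightarrow> quat" where
  "pquat x = Quat (fst x) (fst (snd x)) (snd (snd x)) 0"

definition pconj_quat :: "pt \<Rightarrow> quat" where
  "pconj_quat x = Quat (fst x) (- fst (snd x)) (- snd (snd x)) 0"

text \<open>the point corresponding to the paravector conj(x) / |x|^2\<close>
definition kelvin_pt :: "pt \<Rightarrow> pt" where
  "kelvin_pt x = (fst x / (pnorm x)\<^sup>2, - fst (snd x) / (pnorm x)\<^sup>2, - snd (snd x) / (pnorm x)\<^sup>2)"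

definition unit_dir :: "nat \<Rightarrow> pt" where
  "unit_dir i = (if i = 0 then (1,0,0) else if i = 1 then (0,1,0) else (0,0,1))"

definition pdiff :: "nat \<Rightarrow> (pt \<Rightarrow> quat) \<Rightarrow> pt \<Rightarrow> quat" where
  "pdiff i f x = Quat
     (deriv (\<lambda>t. q0 (f (x + t *\<^sub>R unit_dir i))) 0)
     (deriv (\<lambda>t. q1 (f (x + t *\<^sub>R unit_dir i))) 0)
     (deriv (\<lambda>t. q2 (f (x + t *\<^sub>R unit_dir i))) 0)
     (deriv (\<lambda>t. q3 (f (x + t *\<^sub>R unit_dir i))) 0)"

definition Dbar :: "(pt \<Rightarrow> quat) \<Rightarrow> pt \<Rightarrow> quat" where
  "Dbar f x = qadd (pdiff 0 f x) (qadd (qmul qe1 (pdiff 1 f x)) (qmul qe2 (pdiff 2 f x)))"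

definition hderiv :: "(pt \<Rightarrow> quat) \<Rightarrow> pt \<Rightarrow> quat" where
  "hderiv f x = qscale (1/2) (qadd (pdiff 0 f x)
       (qadd (qscale (-1) (qmul qe1 (pdiff 1 f x))) (qscale (-1) (qmul qe2 (pdiff 2 f x)))))"

definition monogenic_on :: "pt set \<Rightarrow> (pt \<Rightarrow> quat) \<Rightarrow> bool" where
  "monogenic_on S f \<longleftrightarrow> open S \<and>
     (\<forall>x\<in>S. (\<lambda>p. q0 (f p)) differentiable (at x) \<and> (\<lambda>p. q1 (f p)) differentiable (at x)
          \<and> (\<lambda>p. q2 (f p)) differentiable (at x) \<and> (\<lambda>p. q3 (f p)) differentiable (at x)
          \<and> Dbar f x = qzero)"

definition kelvin :: "(pt \<Rightarrow> quat) \<Rightarrow> pt \<Rightarrow> quat" where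
  "kelvin P x = qmul (qscale (1 / (pnorm x)^3) (pconj_quat x)) (P (kelvin_pt x))"

fun legendre :: "nat \<Rightarrow> real poly" where
  "legendre 0 = 1"
| "legendre (Suc 0) = [:0, 1:]"
| "legendre (Suc (Suc n)) =
     smult (1 / real (n + 2))
       (smult (real (2 * n + 3)) ([:0, 1:] * legendre (Suc n)) - smult (real (n + 1)) (legendre n))"

definition assoc_legendre :: "nat \<Rightarrow> nat \<Rightarrow> real \<Rightarrow> real" where
  "assoc_legendre m k t = (sqrt (1 - t\<^sup>2)) ^ m * poly ((pderiv ^^ m) (legendre k)) t"

definition sph_r :: "pt \<Rightarrow> real" where "sph_r x = pnorm x"
definition sph_theta :: "pt \<Rightarrow> real" where "sph_theta x = arccos (fst x / pnorm x)"
definition sph_phi :: "pt \<Rightarrow> real" where "sph_phi x = Arg (Complex (fst (snd x)) (snd (snd x)))"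

definition calA :: "nat \<Rightarrow> nat \<Rightarrow> real \<Rightarrow> real" where
  "calA m n \<theta> = (1/2) * ((sin \<theta>)\<^sup>2 * deriv (\<lambda>t. assoc_legendre m (n + 1) t) (cos \<theta>)
                       + real (n + 1) * cos \<theta> * assoc_legendre m (n + 1) (cos \<theta>))"

definition A_poly :: "nat \<Rightarrow> nat \<Rightarrow> pt \<Rightarrow> quat" where
  "A_poly n l x =
     (let r = sph_r x; \<theta> = sph_theta x; \<phi> = sph_phi x;
          c = 2 ^ (l + 1) * fact n * r ^ n / fact (n + l + 2);
          a = real (n + l + 2) * calA l n \<theta>;
          b = calA (l + 1) n \<theta>
      in qscale c (Quat (a * cos (real l * \<phi>)) (b * cos (real (l + 1) * \<phi>))
                        (b * sin (real (l + 1) * \<phi>)) (- a * sin (real l * \<phi>))))"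

definition phi_basis :: "nat \<Rightarrow> nat \<Rightarrow> pt \<Rightarrow> quat" where
  "phi_basis n l = (\<lambda>x. qscale (1 / (2 ^ (l + 1) * fact n) *
      sqrt (real (2 * n + 3) * fact (n - l) * fact (n + l + 1) / pi)) (A_poly n l x))"

text \<open>phi_neg n l is the function written phi_{-(n+2)}^l in the paper\<close>
definition phi_neg :: "nat \<Rightarrow> nat \<Rightarrow> pt \<Rightarrow> quat" where
  "phi_neg n l = (\<lambda>x. qscale (sqrt (real (2 * n + 1) / real (2 * n + 3))) (kelvin (phi_basis n l) x))"

end

theory Submission
  imports Defs
begin

text \<open>
  Write r = |x|, t = x0/r, z = x1 + i x2, a quaternion as F + e1 G with complex F, G, and P_N^(m) for
  the m-th derivative of the Legendre polynomial P_N. Up to the constant kelvin_coeff n l, the Kelvin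
  image of phi_n^l is the pair F = (n+1-l) P_(n+1)^(l)(t) z^l / r^(n+l+2),
  G = - P_(n+1)^(l+1)(t) z^(l+1) / r^(n+l+3). For every pair of this shape Dbar vanishes by the Legendre
  differential equation, so the hypercomplex derivative is the x0-derivative; by the lowering identity
  (1-t^2) P_N^(m+1) - (N+m+1) t P_N^(m) = (m-N-1) P_(N+1)^(m) it maps the pair for n to -(n+1-l) times
  the pair for n+1. Both statements of the theorem thereby reduce to an identity between normalising
  constants.
\<close>

section \<open>Legendre polynomials\<close>

abbreviation legendre_der :: "nat \<Rightarrow> nat \<Rightarrow> real poly" where
  "legendre_der m N \<equiv> (pderiv ^^ m) (legendre N)"

lemma legendre_recurrence:
  "(real n + 2) * poly (legendre (Suc (Suc n))) t =
     (2 * real n + 3) * t * poly (legendre (Suc n)) t - (real n + 1) * poly (legendre n) t"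
  by (simp add: field_simps)

lemma pderiv_legendre_recurrence:
  "(real n + 2) * poly (pderiv (legendre (Suc (Suc n)))) t =
     (2 * real n + 3) * (poly (legendre (Suc n)) t + t * poly (pderiv (legendre (Suc n))) t)
     - (real n + 1) * poly (pderiv (legendre n)) t"
  by (simp add: pderiv_smult pderiv_mult pderiv_diff pderiv_pCons field_simps)

lemma poly_pderiv_legendre_Suc:
  "poly (pderiv (legendre (Suc N))) t = t * poly (pderiv (legendre N)) t + (real N + 1) * poly (legendre N) t
   \<and> t * poly (pderiv (legendre (Suc N))) t - poly (pderiv (legendre N)) t = (real N + 1) * poly (legendre (Suc N)) t"
proof (induction N)
  case 0
  show ?case by (simp add: pderiv_pCons)
next
  case (Suc N)
  let ?P = "\<lambda>k. poly (legendre k) t" and ?D = "\<lambda>k. poly (pderiv (legendre k)) t"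
  have a: "?D (Suc (Suc N)) = t * ?D (Suc N) + (real N + 2) * ?P (Suc N)"
  proof -
    have "(real N + 2) * (?D (Suc (Suc N)) - (t * ?D (Suc N) + (real N + 2) * ?P (Suc N))) = 0"
      using pderiv_legendre_recurrence[of N t] Suc.IH by algebra
    thus ?thesis by simp
  qed
  have "t * ?D (Suc (Suc N)) - ?D (Suc N) = (real N + 2) * ?P (Suc (Suc N))"
    using legendre_recurrence[of N t] Suc.IH a by algebra
  with a show ?case by (simp del: legendre.simps add: algebra_simps)
qed

lemma pderiv_legendre_Suc:
  "pderiv (legendre (Suc N)) = [:0, 1:] * pderiv (legendre N) + smult (real N + 1) (legendre N)"
  by (rule poly_ext) (simp del: legendre.simps add: poly_pderiv_legendre_Suc)

lemma legendre_der_Suc_Suc: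
  "legendre_der (Suc m) (Suc N) = [:0, 1:] * legendre_der (Suc m) N + smult (real N + 1 + real m) (legendre_der m N)"
proof (induction m)
  case 0
  show ?case using pderiv_legendre_Suc[of N] by simp
next
  case (Suc m)
  have "legendre_der (Suc (Suc m)) (Suc N) = pderiv (legendre_der (Suc m) (Suc N))" by simp
  also have "\<dots> = [:0, 1:] * legendre_der (Suc (Suc m)) N + smult (real N + 1 + real (Suc m)) (legendre_der (Suc m) N)"
    unfolding Suc.IH
    by (rule poly_ext) (simp del: legendre.simps add: pderiv_mult pderiv_pCons pderiv_add pderiv_smult algebra_simps)
  finally show ?case .
qed

lemma one_minus_X2_pderiv_legendre:
  "[:1, 0, -1:] * pderiv (legendre N) = smult (real N + 1) ([:0, 1:] * legendre N - legendre (Suc N))"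
proof (rule poly_ext)
  fix t
  show "poly ([:1, 0, -1:] * pderiv (legendre N)) t
      = poly (smult (real N + 1) ([:0, 1:] * legendre N - legendre (Suc N))) t"
    using poly_pderiv_legendre_Suc[of N t] by (simp del: legendre.simps) algebra
qed

lemma legendre_ode:
  "[:1, 0, -1:] * legendre_der 2 N - smult 2 ([:0, 1:] * legendre_der 1 N)
     + smult (real N * (real N + 1)) (legendre_der 0 N) = 0"
proof (rule poly_ext)
  fix t
  have "poly (pderiv ([:1, 0, -1:] * pderiv (legendre N))) t
      = poly (pderiv (smult (real N + 1) ([:0, 1:] * legendre N - legendre (Suc N)))) t"
    unfolding one_minus_X2_pderiv_legendre ..
  with poly_pderiv_legendre_Suc[of N t]
  show "poly ([:1, 0, -1:] * legendre_der 2 N - smult 2 ([:0, 1:] * legendre_der 1 N)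
      + smult (real N * (real N + 1)) (legendre_der 0 N)) t = poly 0 t"
    by (simp del: legendre.simps add: numeral_2_eq_2 pderiv_mult pderiv_pCons pderiv_diff
        pderiv_smult pderiv_add pderiv_minus) algebra
qed

lemma legendre_der_ode:
  "[:1, 0, -1:] * legendre_der (Suc (Suc m)) N - smult (2 * (real m + 1)) ([:0, 1:] * legendre_der (Suc m) N)
     + smult (real N * (real N + 1) - real m * (real m + 1)) (legendre_der m N) = 0"
proof (induction m)
  case 0
  show ?case using legendre_ode[of N] by (simp add: numeral_2_eq_2)
next
  case (Suc m)
  show ?case
  proof (rule poly_ext)
    fix t
    have "poly (pderiv ([:1, 0, -1:] * legendre_der (Suc (Suc m)) N
        - smult (2 * (real m + 1)) ([:0, 1:] * legendre_der (Suc m) N)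
        + smult (real N * (real N + 1) - real m * (real m + 1)) (legendre_der m N))) t = 0"
      unfolding Suc.IH by simp
    thus "poly ([:1, 0, -1:] * legendre_der (Suc (Suc (Suc m))) N
        - smult (2 * (real (Suc m) + 1)) ([:0, 1:] * legendre_der (Suc (Suc m)) N)
        + smult (real N * (real N + 1) - real (Suc m) * (real (Suc m) + 1)) (legendre_der (Suc m) N)) t = poly 0 t"
      by (simp del: legendre.simps add: pderiv_mult pderiv_pCons pderiv_diff pderiv_add pderiv_smult
          pderiv_minus) algebra
  qed
qed

lemma legendre_der_lowering:
  "[:1, 0, -1:] * legendre_der (Suc m) N - smult (real N + real m + 1) ([:0, 1:] * legendre_der m N)
     = smult (real m - real N - 1) (legendre_der m (Suc N))"
proof (induction m)
  case 0
  show ?case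
  proof (rule poly_ext)
    fix t
    show "poly ([:1, 0, -1:] * legendre_der (Suc 0) N - smult (real N + real 0 + 1) ([:0, 1:] * legendre_der 0 N)) t
        = poly (smult (real 0 - real N - 1) (legendre_der 0 (Suc N))) t"
      using arg_cong[OF one_minus_X2_pderiv_legendre[of N], of "\<lambda>p. poly p t"]
      by (simp del: legendre.simps add: algebra_simps)
  qed
next
  case (Suc m)
  show ?case
  proof (rule poly_ext)
    fix t
    have "poly (pderiv ([:1, 0, -1:] * legendre_der (Suc m) N
        - smult (real N + real m + 1) ([:0, 1:] * legendre_der m N))) t
       = poly (pderiv (smult (real m - real N - 1) (legendre_der m (Suc N)))) t"
      unfolding Suc.IH ..
    moreover have "poly (legendre_der (Suc m) (Suc N)) t
        = poly ([:0, 1:] * legendre_der (Suc m) N + smult (real N + 1 + real m) (legendre_der m N)) t"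
      unfolding legendre_der_Suc_Suc ..
    ultimately show "poly ([:1, 0, -1:] * legendre_der (Suc (Suc m)) N
        - smult (real N + real (Suc m) + 1) ([:0, 1:] * legendre_der (Suc m) N)) t
       = poly (smult (real (Suc m) - real N - 1) (legendre_der (Suc m) (Suc N))) t"
      by (simp del: legendre.simps add: pderiv_mult pderiv_pCons pderiv_diff pderiv_add pderiv_smult
          pderiv_minus) algebra
  qed
qed

lemma poly_legendre_der_ode:
  "(1 - t\<^sup>2) * poly (legendre_der (Suc (Suc m)) N) t
     = 2 * (real m + 1) * t * poly (legendre_der (Suc m) N) t
       - (real N * (real N + 1) - real m * (real m + 1)) * poly (legendre_der m N) t"
  using arg_cong[OF legendre_der_ode[of m N], of "\<lambda>p. poly p t"]
  by (simp del: funpow.simps add: algebra_simps power2_eq_square)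

lemma poly_legendre_der_lowering:
  "(1 - t\<^sup>2) * poly (legendre_der (Suc m) N) t - (real N + real m + 1) * t * poly (legendre_der m N) t
     = (real m - real N - 1) * poly (legendre_der m (Suc N)) t"
  using arg_cong[OF legendre_der_lowering[of m N], of "\<lambda>p. poly p t"]
  by (simp del: funpow.simps add: algebra_simps power2_eq_square)

section \<open>Quaternions as pairs of complex numbers\<close>

text \<open>cquat F G is the quaternion F + e1 G, the complex unit being identified with -e3.\<close>
definition cquat :: "complex \<Rightarrow> complex \<Rightarrow> quat" where
  "cquat F G = Quat (Re F) (Re G) (Im G) (- Im F)"

lemma qmul_cquat: "qmul (cquat F1 G1) (cquat F2 G2) = cquat (F1 * F2 - cnj G1 * G2) (cnj F1 * G2 + G1 * F2)"
  by (simp add: qmul_def cquat_def algebra_simps)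

lemma qscale_cquat: "qscale c (cquat F G) = cquat (of_real c * F) (of_real c * G)"
  by (simp add: qscale_def cquat_def)

lemma cquat_eq_iff: "cquat F G = cquat F' G' \<longleftrightarrow> F = F' \<and> G = G'"
  by (auto simp: cquat_def complex_eq_iff)

lemma qzero_eq_cquat: "qzero = cquat 0 0"
  by (simp add: qzero_def cquat_def)

lemma Dbar_cquat:
  assumes "pdiff 0 f x = cquat F0 G0" "pdiff 1 f x = cquat F1 G1" "pdiff 2 f x = cquat F2 G2"
  shows "Dbar f x = cquat (F0 - (G1 - \<i> * G2)) (G0 + (F1 + \<i> * F2))"
  unfolding Dbar_def assms by (simp add: qadd_def qmul_def qe1_def qe2_def cquat_def)

lemma hderiv_eq_pdiff0_if_Dbar_zero: "Dbar f x = qzero \<Longrightarrow> hderiv f x = pdiff 0 f x"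
  unfolding Dbar_def hderiv_def
  by (cases "pdiff 0 f x"; cases "pdiff 1 f x"; cases "pdiff 2 f x")
     (simp add: qadd_def qmul_def qe1_def qe2_def qzero_def qscale_def)

lemma deriv_line_bounded_linear:
  assumes L: "bounded_linear L" and H: "(H has_derivative H') (at x)"
  shows "deriv (\<lambda>s. L (H (x + s *\<^sub>R v))) 0 = L (H' v)"
proof -
  have line: "((\<lambda>s::real. x + s *\<^sub>R v) has_derivative (\<lambda>s. s *\<^sub>R v)) (at 0)"
    by (auto intro!: derivative_eq_intros)
  have "((\<lambda>s. L (H (x + s *\<^sub>R v))) has_derivative (\<lambda>s. L (H' (s *\<^sub>R v)))) (at 0)"
    using bounded_linear.has_derivative[OF L has_derivative_compose[OF line, of H H']] H by simp
  moreover have "(\<lambda>s. L (H' (s *\<^sub>R v))) = (\<lambda>s. L (H' v) * s)"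
    using linear_scale[OF has_derivative_linear[OF H]] linear_scale[OF bounded_linear.linear[OF L]] by auto
  ultimately show ?thesis
    by (intro DERIV_imp_deriv) (simp add: has_field_derivative_def)
qed

lemma pdiff_cquat:
  assumes "(F has_derivative F') (at x)" "(G has_derivative G') (at x)"
  shows "pdiff i (\<lambda>y. cquat (F y) (G y)) x = cquat (F' (unit_dir i)) (G' (unit_dir i))"
proof -
  have minus_Im: "bounded_linear (\<lambda>w. - Im w)"
    by (rule bounded_linear_minus[OF bounded_linear_Im])
  show ?thesis
    unfolding pdiff_def cquat_def
    using assms[THEN deriv_line_bounded_linear[OF bounded_linear_Re]]
      assms[THEN deriv_line_bounded_linear[OF bounded_linear_Im]]
      assms(1)[THEN deriv_line_bounded_linear[OF minus_Im]]
    by simp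
qed

definition zcoord :: "pt \<Rightarrow> complex" where
  "zcoord x = Complex (fst (snd x)) (snd (snd x))"

lemma bounded_linear_zcoord: "bounded_linear zcoord"
  unfolding linear_conv_bounded_linear[symmetric]
  by (rule linearI) (simp_all add: zcoord_def complex_eq_iff)

lemma zcoord_unit_dir: "zcoord (unit_dir 0) = 0" "zcoord (unit_dir 1) = 1" "zcoord (unit_dir 2) = \<i>"
  by (simp_all add: unit_dir_def zcoord_def complex_eq_iff)

lemma pnorm_eq_norm: "pnorm x = norm x"
  by (cases x) (simp add: pnorm_def norm_Pair add.assoc)

lemma norm_pt_sq: "(norm x)\<^sup>2 = (fst x)\<^sup>2 + (cmod (zcoord x))\<^sup>2"
  by (cases x) (simp add: norm_Pair zcoord_def cmod_def)

lemma pconj_quat_cquat: "pconj_quat x = cquat (of_real (fst x)) (- zcoord x)"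
  by (simp add: pconj_quat_def cquat_def zcoord_def)

lemma cnj_zcoord_mult: "cnj (zcoord x) * zcoord x = of_real ((norm x)\<^sup>2 - (fst x)\<^sup>2)"
  using norm_pt_sq[of x] by (simp add: complex_norm_square[symmetric] mult.commute)

lemma abs_fst_div_norm_le: "\<bar>fst (x::pt) / norm x\<bar> \<le> 1"
proof -
  have "\<bar>fst x\<bar> \<le> norm x"
    using norm_pt_sq[of x] by (metis abs_le_square_iff le_add_same_cancel1 norm_ge_zero zero_le_power2 abs_norm_cancel)
  thus ?thesis by (cases "x = 0") (simp_all add: abs_div divide_le_eq_1)
qed

lemma sqrt_one_minus_sq_fst_div_norm:
  "x \<noteq> 0 \<Longrightarrow> sqrt (1 - (fst x / norm x)\<^sup>2) = cmod (zcoord x) / norm x"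
proof -
  assume "x \<noteq> 0"
  hence "1 - (fst x / norm x)\<^sup>2 = ((norm x)\<^sup>2 - (fst x)\<^sup>2) / (norm x)\<^sup>2"
    by (simp add: field_simps power_divide)
  also have "\<dots> = (cmod (zcoord x) / norm x)\<^sup>2"
    by (simp add: norm_pt_sq[of x] power_divide)
  finally show ?thesis by simp
qed

section \<open>The Kelvin images in cylindrical form\<close>

definition calA_poly :: "nat \<Rightarrow> nat \<Rightarrow> real poly" where
  "calA_poly m N = smult (real N - real m) ([:0, 1:] * legendre_der m N) + [:1, 0, -1:] * legendre_der (Suc m) N"

lemma assoc_legendre_has_real_derivative:
  assumes "\<bar>t\<bar> < 1"
  shows "DERIV (assoc_legendre m N) t :> sqrt (1 - t\<^sup>2) ^ m *
           (poly (legendre_der (Suc m) N) t - real m * t / (1 - t\<^sup>2) * poly (legendre_der m N) t)"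
proof -
  define s where "s = sqrt (1 - t\<^sup>2)"
  have pos: "1 - t\<^sup>2 > 0" using assms by (simp add: abs_square_less_1)
  hence s: "s > 0" "s\<^sup>2 = 1 - t\<^sup>2" by (simp_all add: s_def)
  have "DERIV (\<lambda>t. 1 - t\<^sup>2) t :> - (2 * t)"
    by (auto intro!: derivative_eq_intros)
  from DERIV_chain2[OF DERIV_real_sqrt[OF pos] this]
  have dsqrt: "DERIV (\<lambda>t. sqrt (1 - t\<^sup>2)) t :> inverse s / 2 * (- (2 * t))"
    unfolding s_def .
  have "DERIV (\<lambda>t. sqrt (1 - t\<^sup>2) ^ m) t :> real m * s ^ (m - 1) * (inverse s / 2 * (- (2 * t)))"
    by (rule DERIV_cong[OF DERIV_power[OF dsqrt, of m]]) (simp add: s_def)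
  moreover have "real m * s ^ (m - 1) * (inverse s / 2 * (- (2 * t))) = - (s ^ m * (real m * t / s\<^sup>2))"
    using s(1) by (cases m) (simp_all add: field_simps power2_eq_square)
  ultimately have "DERIV (\<lambda>t. sqrt (1 - t\<^sup>2) ^ m) t :> - (s ^ m * (real m * t / (1 - t\<^sup>2)))"
    by (simp add: s(2))
  from DERIV_mult[OF this poly_DERIV[of "legendre_der m N" t]] show ?thesis
    unfolding assoc_legendre_def[abs_def] s_def[symmetric] by (simp add: algebra_simps)
qed

lemma calA_arccos:
  assumes "\<bar>t\<bar> \<le> 1"
  shows "calA m n (arccos t) = 1/2 * sqrt (1 - t\<^sup>2) ^ m * poly (calA_poly m (Suc n)) t"
proof -
  have cos: "cos (arccos t) = t" and sin: "(sin (arccos t))\<^sup>2 = 1 - t\<^sup>2"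
    using assms by (simp_all add: sin_arccos abs_le_iff abs_square_le_1)
  show ?thesis
  proof (cases "\<bar>t\<bar> < 1")
    case True
    hence "t\<^sup>2 < 1" by (simp add: abs_square_less_1)
    hence "1 - t\<^sup>2 \<noteq> 0" by simp
    with DERIV_imp_deriv[OF assoc_legendre_has_real_derivative[OF True, of m "Suc n"]] show ?thesis
      unfolding calA_def cos sin by (simp add: assoc_legendre_def calA_poly_def field_simps power2_eq_square)
  next
    case False
    with assms have "1 - t\<^sup>2 = 0" by (simp add: abs_square_eq_1)
    thus ?thesis
      unfolding calA_def cos sin by (cases m) (simp_all add: assoc_legendre_def calA_poly_def power2_eq_square)
  qed
qed

lemma cmod_power_cis_Arg: "of_real (cmod w ^ m) * cis (real m * Arg w) = w ^ m"
proof (cases "w = 0")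
  case True
  thus ?thesis by (cases m) simp_all
next
  case False
  have "w ^ m = rcis (cmod w) (Arg w) ^ m" by (simp add: rcis_cmod_Arg)
  also have "\<dots> = rcis (cmod w ^ m) (real m * Arg w)" by (rule DeMoivre2)
  finally show ?thesis by (simp add: rcis_def)
qed

lemma Quat_cos_sin_cquat:
  "Quat (a * cos (real l * \<phi>)) (b * cos (real (l + 1) * \<phi>)) (b * sin (real (l + 1) * \<phi>)) (- a * sin (real l * \<phi>))
     = cquat (of_real a * cis (real l * \<phi>)) (of_real b * cis (real (Suc l) * \<phi>))"
  by (simp add: cquat_def)

lemma A_poly_cquat:
  assumes "y \<noteq> 0"
  defines "r \<equiv> norm y" and "t \<equiv> fst y / norm y" and "z \<equiv> zcoord y"
  shows "A_poly n l y = qscale (2 ^ l * fact n / fact (n + l + 2))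
     (cquat (of_real (real (n + l + 2) * poly (calA_poly l (Suc n)) t * (r ^ n / r ^ l)) * z ^ l)
            (of_real (poly (calA_poly (Suc l) (Suc n)) t * (r ^ n / r ^ Suc l)) * z ^ Suc l))"
proof -
  have calA: "calA m n (sph_theta y) = 1/2 * (cmod z / r) ^ m * poly (calA_poly m (Suc n)) t" for m
    using calA_arccos[OF abs_fst_div_norm_le[of y]] sqrt_one_minus_sq_fst_div_norm[OF assms(1)]
    by (simp add: sph_theta_def pnorm_eq_norm r_def t_def z_def)
  have cis: "of_real (c * (cmod z / r) ^ m) * cis (real m * Arg z) = of_real (c / r ^ m) * z ^ m" for c m
  proof -
    have "of_real (c * (cmod z / r) ^ m) * cis (real m * Arg z)
        = of_real (c / r ^ m) * (of_real (cmod z ^ m) * cis (real m * Arg z))"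
      by (simp add: power_divide)
    thus ?thesis by (simp only: cmod_power_cis_Arg)
  qed
  have phi: "sph_phi y = Arg z" by (simp add: sph_phi_def z_def zcoord_def)
  define C where "C = 2 ^ (l + 1) * fact n * r ^ n / fact (n + l + 2)"
  define k where "k = real (n + l + 2)"
  define P where "P = poly (calA_poly l (Suc n)) t"
  define P' where "P' = poly (calA_poly (Suc l) (Suc n)) t"
  have "A_poly n l y = qscale C (cquat (of_real (k * (1/2 * (cmod z / r) ^ l * P)) * cis (real l * Arg z))
                                       (of_real (1/2 * (cmod z / r) ^ Suc l * P') * cis (real (Suc l) * Arg z)))"
    unfolding A_poly_def Let_def calA phi Quat_cos_sin_cquat
    by (simp add: sph_r_def pnorm_eq_norm r_def C_def k_def P_def P'_def)
  also have "\<dots> = qscale C (cquat (of_real (k / 2 * P / r ^ l) * z ^ l) (of_real (P' / 2 / r ^ Suc l) * z ^ Suc l))"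
    using cis[of "k / 2 * P" l] cis[of "P' / 2" "Suc l"] by (simp add: mult_ac)
  also have "\<dots> = qscale (2 ^ l * fact n / fact (n + l + 2))
     (cquat (of_real (k * P * (r ^ n / r ^ l)) * z ^ l) (of_real (P' * (r ^ n / r ^ Suc l)) * z ^ Suc l))"
    unfolding qscale_cquat cquat_eq_iff of_real_mult[symmetric] mult.assoc[symmetric]
    by (simp add: C_def field_simps)
  finally show ?thesis by (simp add: k_def P_def P'_def)
qed

lemma norm_kelvin_pt: "norm (kelvin_pt x) = 1 / norm x"
proof -
  have "kelvin_pt x = (1 / (norm x)\<^sup>2) *\<^sub>R (fst x, - fst (snd x), - snd (snd x))"
    by (simp add: kelvin_pt_def pnorm_eq_norm)
  moreover have "norm (fst x, - fst (snd x), - snd (snd x)) = norm x"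
    by (cases x) (simp add: norm_Pair)
  ultimately have "norm (kelvin_pt x) = \<bar>1 / (norm x)\<^sup>2\<bar> * norm x"
    by (simp only: norm_scaleR)
  thus ?thesis by (cases "norm x = 0") (simp_all add: power2_eq_square)
qed

lemma kelvin_pt_nonzero: "x \<noteq> 0 \<Longrightarrow> kelvin_pt x \<noteq> 0"
  using norm_kelvin_pt[of x] by auto

lemma fst_kelvin_pt_div_norm: "x \<noteq> 0 \<Longrightarrow> fst (kelvin_pt x) / norm (kelvin_pt x) = fst x / norm x"
  unfolding norm_kelvin_pt by (simp add: kelvin_pt_def pnorm_eq_norm power2_eq_square)

lemma zcoord_kelvin_pt_power: "zcoord (kelvin_pt x) ^ m = of_real ((- 1 / (norm x)\<^sup>2) ^ m) * zcoord x ^ m"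
proof -
  have "zcoord (kelvin_pt x) = of_real (- 1 / (norm x)\<^sup>2) * zcoord x"
    by (simp add: kelvin_pt_def pnorm_eq_norm zcoord_def complex_eq_iff)
  then show ?thesis by (simp only: power_mult_distrib of_real_power)
qed

lemma phi_basis_kelvin_pt:
  assumes "x \<noteq> 0"
  defines "r \<equiv> norm x" and "t \<equiv> fst x / norm x" and "z \<equiv> zcoord x"
  shows "phi_basis n l (kelvin_pt x) =
    qscale ((- 1) ^ l * sqrt (real (2 * n + 3) * fact (n - l) * fact (n + l + 1) / pi) / (2 * fact (n + l + 2)))
      (cquat (of_real (real (n + l + 2) * poly (calA_poly l (Suc n)) t / r ^ (n + l)) * z ^ l)
             (of_real (- poly (calA_poly (Suc l) (Suc n)) t / r ^ Suc (n + l)) * z ^ Suc l))"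
proof -
  have r: "r > 0" using assms(1) by (simp add: r_def)
  have power_inv_sq: "(- 1 / r\<^sup>2) ^ m = (- 1) ^ m / (r ^ m * r ^ m)" for m
    unfolding power_divide by (simp add: power2_eq_square power_mult_distrib)
  have scale: "(1 / r) ^ n / (1 / r) ^ m * (- 1 / r\<^sup>2) ^ m = (- 1) ^ m / r ^ (n + m)" for m
    unfolding power_inv_sq using r by (simp add: power_divide power_add field_simps)
  have const: "1 / (2 ^ (l + 1) * fact n) * S * (2 ^ l * fact n / fact (n + l + 2)) = S / (2 * fact (n + l + 2))"
    for S :: real by simp
  have collect_of_real: "of_real a * (of_real b * (of_real (c * q) * (of_real s * w))) = of_real (a * b * c * (q * s)) * w"
    for a b c q s :: real and w :: complex
    by (simp add: mult_ac)
  show ?thesis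
    unfolding phi_basis_def A_poly_cquat[OF kelvin_pt_nonzero[OF assms(1)]]
    unfolding fst_kelvin_pt_div_norm[OF assms(1)]
    unfolding zcoord_kelvin_pt_power norm_kelvin_pt
      qscale_cquat cquat_eq_iff t_def[symmetric]
    unfolding r_def[symmetric] z_def[symmetric] collect_of_real scale const
    unfolding mult.assoc[symmetric] of_real_mult[symmetric]
    by (simp add: mult_ac)
qed

lemma qmul_qscale_right: "qmul a (qscale c b) = qscale c (qmul a b)"
  by (simp add: qmul_def qscale_def algebra_simps)

lemma qscale_qscale: "qscale a (qscale b q) = qscale (a * b) q"
  by (simp add: qscale_def)

lemma qmul_kelvin_factor:
  assumes "x \<noteq> 0"
  defines "r \<equiv> norm x" and "t \<equiv> fst x / norm x" and "z \<equiv> zcoord x"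
  shows "qmul (qscale (1 / r ^ 3) (pconj_quat x))
           (cquat (of_real (\<alpha> / r ^ j) * z ^ l) (of_real (\<beta> / r ^ Suc j) * z ^ Suc l))
       = cquat (of_real ((\<alpha> * t + \<beta> * (1 - t\<^sup>2)) / r ^ (j + 2)) * z ^ l)
               (of_real ((\<beta> * t - \<alpha>) / r ^ (j + 3)) * z ^ Suc l)"
proof -
  have r: "r > 0" using assms(1) by (simp add: r_def)
  have zz: "cnj z * z = of_real (r\<^sup>2 * (1 - t\<^sup>2))"
    unfolding z_def cnj_zcoord_mult using r by (simp add: r_def t_def field_simps power_divide)
  have F: "of_real (fst x / r ^ 3) * (of_real (\<alpha> / r ^ j) * z ^ l)
      - cnj (- (of_real (1 / r ^ 3) * z)) * (of_real (\<beta> / r ^ Suc j) * z ^ Suc l)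
      = of_real ((\<alpha> * t + \<beta> * (1 - t\<^sup>2)) / r ^ (j + 2)) * z ^ l"
  proof -
    have "of_real (fst x / r ^ 3) * (of_real (\<alpha> / r ^ j) * z ^ l)
        - cnj (- (of_real (1 / r ^ 3) * z)) * (of_real (\<beta> / r ^ Suc j) * z ^ Suc l)
        = (of_real (fst x / r ^ 3 * (\<alpha> / r ^ j)) + of_real (\<beta> / (r ^ 3 * r ^ Suc j)) * (cnj z * z)) * z ^ l"
      by (simp add: algebra_simps)
    also have "\<dots> = of_real (fst x / r ^ 3 * (\<alpha> / r ^ j) + \<beta> / (r ^ 3 * r ^ Suc j) * (r\<^sup>2 * (1 - t\<^sup>2))) * z ^ l"
      unfolding zz by simp
    also have "fst x / r ^ 3 * (\<alpha> / r ^ j) + \<beta> / (r ^ 3 * r ^ Suc j) * (r\<^sup>2 * (1 - t\<^sup>2))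
        = (\<alpha> * t + \<beta> * (1 - t\<^sup>2)) / r ^ (j + 2)"
      using r by (simp add: t_def r_def[symmetric] field_simps power_add power2_eq_square power3_eq_cube)
    finally show ?thesis .
  qed
  have G: "cnj (of_real (fst x / r ^ 3)) * (of_real (\<beta> / r ^ Suc j) * z ^ Suc l)
      + - (of_real (1 / r ^ 3) * z) * (of_real (\<alpha> / r ^ j) * z ^ l)
      = of_real ((\<beta> * t - \<alpha>) / r ^ (j + 3)) * z ^ Suc l"
    using r by (simp add: t_def r_def[symmetric] field_simps power_add power3_eq_cube)
  show ?thesis
    unfolding pconj_quat_cquat z_def[symmetric] qscale_cquat qmul_cquat cquat_eq_iff F[symmetric] G[symmetric]
    by (simp add: field_simps)
qed

lemma calA_poly_relations:
  fixes t :: real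
  shows "real (n + l + 2) * t * poly (calA_poly l (Suc n)) t - (1 - t\<^sup>2) * poly (calA_poly (Suc l) (Suc n)) t
           = real (n + l + 2) * (real (Suc n) - real l) * poly (legendre_der l (Suc n)) t"
    and "t * poly (calA_poly (Suc l) (Suc n)) t + real (n + l + 2) * poly (calA_poly l (Suc n)) t
           = real (n + l + 2) * poly (legendre_der (Suc l) (Suc n)) t"
  using poly_legendre_der_ode[of t l "Suc n"] unfolding calA_poly_def
  by (simp_all del: funpow.simps add: power2_eq_square) algebra+

definition sph_term :: "real \<Rightarrow> nat \<Rightarrow> real poly \<Rightarrow> nat \<Rightarrow> pt \<Rightarrow> complex" where
  "sph_term a k p m x = of_real (a / norm x ^ k * poly p (fst x / norm x)) * zcoord x ^ m"

definition Phi :: "real \<Rightarrow> nat \<Rightarrow> nat \<Rightarrow> pt \<Rightarrow> quat" where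
  "Phi A n l x = cquat (sph_term (A * (real (Suc n) - real l)) (n + l + 2) (legendre_der l (Suc n)) l x)
                       (sph_term (- A) (n + l + 3) (legendre_der (Suc l) (Suc n)) (Suc l) x)"

definition kelvin_coeff :: "nat \<Rightarrow> nat \<Rightarrow> real" where
  "kelvin_coeff n l = (- 1) ^ l / 2 * sqrt (real (2 * n + 1) * fact (n - l) * fact (n + l + 1) / pi) / fact (n + l + 1)"

lemma kelvin_coeff_eq:
  "sqrt (real (2 * n + 1) / real (2 * n + 3))
     * ((- 1) ^ l * sqrt (real (2 * n + 3) * fact (n - l) * fact (n + l + 1) / pi) / (2 * fact (n + l + 2)))
     * real (n + l + 2) = kelvin_coeff n l"
proof -
  have "sqrt (real (2 * n + 1) / real (2 * n + 3)) * sqrt (real (2 * n + 3) * fact (n - l) * fact (n + l + 1) / pi)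
      = sqrt (real (2 * n + 1) * fact (n - l) * fact (n + l + 1) / pi)"
    by (simp add: real_sqrt_mult[symmetric])
  moreover have "(fact (n + l + 2) :: real) = real (n + l + 2) * fact (n + l + 1)"
    by (simp add: algebra_simps)
  moreover have "u * (s * v / (2 * (k * F))) * k = s / 2 * (u * v) / F" if "k \<noteq> 0" for u s v k F :: real
    using that by (simp add: field_simps)
  ultimately show ?thesis
    unfolding kelvin_coeff_def by simp
qed

lemma phi_neg_eq_Phi: "phi_neg n l = Phi (kelvin_coeff n l) n l"
proof
  fix x :: pt
  show "phi_neg n l x = Phi (kelvin_coeff n l) n l x"
  proof (cases "x = 0")
    case True
    then show ?thesis
      by (simp add: phi_neg_def kelvin_def Phi_def sph_term_def pnorm_eq_norm cquat_def qmul_def qscale_def)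
  next
    case False
    define r where "r = norm x"
    define t where "t = fst x / norm x"
    define k where "k = real (n + l + 2)"
    define R0 where "R0 = poly (calA_poly l (Suc n)) t"
    define R1 where "R1 = poly (calA_poly (Suc l) (Suc n)) t"
    define c where "c = sqrt (real (2 * n + 1) / real (2 * n + 3))
      * ((- 1) ^ l * sqrt (real (2 * n + 3) * fact (n - l) * fact (n + l + 1) / pi) / (2 * fact (n + l + 2)))"
    have rel: "k * R0 * t + - R1 * (1 - t\<^sup>2) = k * (real (Suc n) - real l) * poly (legendre_der l (Suc n)) t"
      "- R1 * t - k * R0 = - (k * poly (legendre_der (Suc l) (Suc n)) t)"
      using calA_poly_relations[where n = n and l = l and t = t] by (simp_all add: k_def R0_def R1_def algebra_simps)
    have "phi_neg n l x = qscale c (cquat (of_real ((k * R0 * t + - R1 * (1 - t\<^sup>2)) / r ^ (n + l + 2)) * zcoord x ^ l)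
                                       (of_real ((- R1 * t - k * R0) / r ^ (n + l + 3)) * zcoord x ^ Suc l))"
      unfolding phi_neg_def kelvin_def phi_basis_kelvin_pt[OF False] qmul_qscale_right qscale_qscale pnorm_eq_norm
      unfolding t_def[symmetric]
      unfolding r_def[symmetric] k_def[symmetric] R0_def[symmetric] R1_def[symmetric]
      unfolding qmul_kelvin_factor[OF False, of "k * R0" "n + l" l "- R1", folded r_def t_def]
      unfolding c_def ..
    also have "\<dots> = Phi (c * k) n l x"
      unfolding rel Phi_def sph_term_def qscale_cquat cquat_eq_iff t_def[symmetric]
      unfolding r_def[symmetric]
      by (simp add: field_simps)
    finally show ?thesis
      unfolding c_def k_def kelvin_coeff_eq .
  qed
qed

section \<open>The family Phi: monogenicity and hypercomplex derivative\<close>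

lemma radial_factor_has_derivative:
  fixes x :: pt
  assumes "x \<noteq> 0"
  shows "((\<lambda>y. a / norm y ^ k * poly p (fst y / norm y)) has_derivative
     (\<lambda>v. a / norm x ^ (k + 2) * (- real k * (x \<bullet> v) * poly p (fst x / norm x)
        + (fst v * norm x - fst x * (x \<bullet> v) / norm x) * poly (pderiv p) (fst x / norm x)))) (at x)"
proof -
  have r: "norm x > 0" using assms by simp
  show ?thesis
    apply (rule has_derivative_eq_rhs)
     apply (rule derivative_eq_intros has_derivative_norm[OF assms] DERIV_compose_FDERIV[OF poly_DERIV]
        | simp add: assms)+
    using r by (cases k) (auto simp: sgn_div_norm field_simps power_add inner_commute)
qed

definition sph_term_deriv :: "real \<Rightarrow> nat \<Rightarrow> real poly \<Rightarrow> nat \<Rightarrow> pt \<Rightarrow> pt \<Rightarrow> complex" where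
  "sph_term_deriv a k p m x v =
     of_real (a / norm x ^ (k + 2) * (- real k * (x \<bullet> v) * poly p (fst x / norm x)
        + (fst v * norm x - fst x * (x \<bullet> v) / norm x) * poly (pderiv p) (fst x / norm x))) * zcoord x ^ m
     + of_real (a / norm x ^ k * poly p (fst x / norm x)) * (of_nat m * zcoord x ^ (m - 1) * zcoord v)"

lemma sph_term_has_derivative:
  "x \<noteq> 0 \<Longrightarrow> (sph_term a k p m has_derivative sph_term_deriv a k p m x) (at x)"
  unfolding sph_term_def[abs_def] sph_term_deriv_def[abs_def]
  by (rule has_derivative_eq_rhs,
      rule has_derivative_mult[OF bounded_linear.has_derivative[OF bounded_linear_of_real radial_factor_has_derivative]
        has_derivative_power[OF bounded_linear.has_derivative[OF bounded_linear_zcoord has_derivative_ident]]])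
     (simp_all add: algebra_simps fun_eq_iff)

lemma inner_unit_dir: "x \<bullet> unit_dir 0 = fst x" "x \<bullet> unit_dir 1 = fst (snd x)" "x \<bullet> unit_dir 2 = snd (snd x)"
  and fst_unit_dir: "fst (unit_dir 0) = 1" "fst (unit_dir 1) = 0" "fst (unit_dir 2) = 0"
  by (cases x, simp_all add: unit_dir_def)+

lemma sph_term_deriv_unit_dir0:
  assumes "x \<noteq> 0"
  defines "r \<equiv> norm x" and "t \<equiv> fst x / norm x"
  shows "sph_term_deriv a k p m x (unit_dir 0)
     = of_real (a / r ^ (k + 1) * (- real k * t * poly p t + (1 - t\<^sup>2) * poly (pderiv p) t)) * zcoord x ^ m"
proof -
  have "r > 0" using assms(1) by (simp add: r_def)
  hence dir: "a / r ^ (k + 2) * (- real k * fst x * poly p t + (1 * r - fst x * fst x / r) * poly (pderiv p) t)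
      = a / r ^ (k + 1) * (- real k * t * poly p t + (1 - t\<^sup>2) * poly (pderiv p) t)"
    by (simp add: t_def r_def[symmetric] field_simps power2_eq_square)
  show ?thesis
    unfolding sph_term_deriv_def inner_unit_dir fst_unit_dir zcoord_unit_dir
    unfolding t_def[symmetric]
    unfolding r_def[symmetric] dir
    by simp
qed

lemma sph_term_deriv_unit_dir12:
  fixes a :: real and k :: nat and p :: "real poly"
  assumes "x \<noteq> 0"
  defines "r \<equiv> norm x" and "t \<equiv> fst x / norm x" and "z \<equiv> zcoord x"
  defines "g \<equiv> a / r ^ (k + 2) * (- real k * poly p t - t * poly (pderiv p) t)"
  shows "sph_term_deriv a k p m x (unit_dir 1) + \<i> * sph_term_deriv a k p m x (unit_dir 2)
     = of_real g * z ^ Suc m"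
    and "sph_term_deriv a k p (Suc j) x (unit_dir 1) - \<i> * sph_term_deriv a k p (Suc j) x (unit_dir 2)
     = of_real (g * (r\<^sup>2 * (1 - t\<^sup>2)) + 2 * real (Suc j) * (a / r ^ k * poly p t)) * z ^ j"
proof -
  have r: "r > 0" using assms(1) by (simp add: r_def)
  have dir: "a / r ^ (k + 2) * (- real k * c * poly p t + (0 * r - fst x * c / r) * poly (pderiv p) t) = c * g"
    for c using r by (simp add: g_def t_def r_def[symmetric] field_simps)
  have e1: "sph_term_deriv a k p m x (unit_dir 1)
      = of_real (fst (snd x) * g) * z ^ m + of_real (a / r ^ k * poly p t) * (of_nat m * z ^ (m - 1) * 1)" for m
    unfolding sph_term_deriv_def inner_unit_dir fst_unit_dir zcoord_unit_dir
    unfolding t_def[symmetric]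
    unfolding r_def[symmetric] z_def[symmetric] dir ..
  have e2: "sph_term_deriv a k p m x (unit_dir 2)
      = of_real (snd (snd x) * g) * z ^ m + of_real (a / r ^ k * poly p t) * (of_nat m * z ^ (m - 1) * \<i>)" for m
    unfolding sph_term_deriv_def inner_unit_dir fst_unit_dir zcoord_unit_dir
    unfolding t_def[symmetric]
    unfolding r_def[symmetric] z_def[symmetric] dir ..
  have z: "of_real (fst (snd x)) + \<i> * of_real (snd (snd x)) = z"
    and cnj_z: "of_real (fst (snd x)) - \<i> * of_real (snd (snd x)) = cnj z"
    by (simp_all add: z_def zcoord_def complex_eq_iff)
  have zz: "cnj z * z = of_real (r\<^sup>2 * (1 - t\<^sup>2))"
    unfolding z_def cnj_zcoord_mult using r by (simp add: r_def t_def field_simps power_divide)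
  have "sph_term_deriv a k p m x (unit_dir 1) + \<i> * sph_term_deriv a k p m x (unit_dir 2)
      = of_real g * (of_real (fst (snd x)) + \<i> * of_real (snd (snd x))) * z ^ m"
    unfolding e1 e2 by (simp add: algebra_simps)
  then show "sph_term_deriv a k p m x (unit_dir 1) + \<i> * sph_term_deriv a k p m x (unit_dir 2)
      = of_real g * z ^ Suc m"
    unfolding z by simp
  have "sph_term_deriv a k p (Suc j) x (unit_dir 1) - \<i> * sph_term_deriv a k p (Suc j) x (unit_dir 2)
      = of_real g * (cnj z * z) * z ^ j + of_real (2 * real (Suc j) * (a / r ^ k * poly p t)) * z ^ j"
    unfolding e1 e2 cnj_z[symmetric] using r by (simp add: field_simps)
  then show "sph_term_deriv a k p (Suc j) x (unit_dir 1) - \<i> * sph_term_deriv a k p (Suc j) x (unit_dir 2)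
      = of_real (g * (r\<^sup>2 * (1 - t\<^sup>2)) + 2 * real (Suc j) * (a / r ^ k * poly p t)) * z ^ j"
    unfolding zz by (simp add: algebra_simps)
qed

lemma pderiv_legendre_der: "pderiv (legendre_der m N) = legendre_der (Suc m) N"
  by simp

lemma pdiff_Phi:
  assumes "x \<noteq> 0"
  shows "pdiff i (Phi A n l) x =
    cquat (sph_term_deriv (A * (real (Suc n) - real l)) (n + l + 2) (legendre_der l (Suc n)) l x (unit_dir i))
          (sph_term_deriv (- A) (n + l + 3) (legendre_der (Suc l) (Suc n)) (Suc l) x (unit_dir i))"
  unfolding Phi_def[abs_def] by (rule pdiff_cquat[OF sph_term_has_derivative[OF assms] sph_term_has_derivative[OF assms]])

text \<open>The coefficients of z^l and z^(l+1) in the two components of Dbar (Phi A n l) x.\<close>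
lemma Dbar_Phi_coefficient1:
  fixes r t A P0 P1 P2 :: real
  assumes r: "r > 0"
    and ode: "(1 - t\<^sup>2) * P2 = 2 * (real l + 1) * t * P1 - (real (Suc n) * (real (Suc n) + 1) - real l * (real l + 1)) * P0"
  shows "A * (real (Suc n) - real l) / r ^ (n + l + 2 + 1) * (- real (n + l + 2) * t * P0 + (1 - t\<^sup>2) * P1)
     - (- A / r ^ (n + l + 3 + 2) * (- real (n + l + 3) * P1 - t * P2) * (r\<^sup>2 * (1 - t\<^sup>2))
        + 2 * real (Suc l) * (- A / r ^ (n + l + 3) * P1)) = 0" (is "?L = 0")
proof -
  define u where "u = r ^ (n + l + 3)"
  have u: "u > 0" using r by (simp add: u_def)
  have e1: "r ^ (n + l + 2 + 1) = u" unfolding u_def by (rule arg_cong[where f = "power r"]) simp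
  have e2: "r ^ (n + l + 3 + 2) = u * r\<^sup>2" unfolding u_def by (rule power_add)
  have "?L = A / u * ((real (Suc n) - real l) * (- real (n + l + 2) * t * P0 + (1 - t\<^sup>2) * P1)
      + (1 - t\<^sup>2) * (- real (n + l + 3) * P1) - t * ((1 - t\<^sup>2) * P2) + 2 * real (Suc l) * P1)"
    unfolding e1 e2 u_def[symmetric] using r u by (simp add: field_simps)
  also have "\<dots> = 0" unfolding ode by (simp add: algebra_simps power2_eq_square)
  finally show ?thesis .
qed

lemma Dbar_Phi_coefficient2:
  fixes r t A P0 P1 P2 :: real
  assumes r: "r > 0"
    and ode: "(1 - t\<^sup>2) * P2 = 2 * (real l + 1) * t * P1 - (real (Suc n) * (real (Suc n) + 1) - real l * (real l + 1)) * P0"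
  shows "- A / r ^ (n + l + 3 + 1) * (- real (n + l + 3) * t * P1 + (1 - t\<^sup>2) * P2)
     + A * (real (Suc n) - real l) / r ^ (n + l + 2 + 2) * (- real (n + l + 2) * P0 - t * P1) = 0"
    (is "?L = 0")
proof -
  define u where "u = r ^ (n + l + 4)"
  have u: "u > 0" using r by (simp add: u_def)
  have e: "r ^ (n + l + 3 + 1) = u" "r ^ (n + l + 2 + 2) = u"
    unfolding u_def by (rule arg_cong[where f = "power r"], simp)+
  have "?L = A / u * (real (n + l + 3) * t * P1 - (1 - t\<^sup>2) * P2
      + (real (Suc n) - real l) * (- real (n + l + 2) * P0 - t * P1))"
    unfolding e using u by (simp add: field_simps)
  also have "\<dots> = 0" unfolding ode by (simp add: algebra_simps)
  finally show ?thesis .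
qed

lemma Dbar_Phi:
  assumes "x \<noteq> 0"
  shows "Dbar (Phi A n l) x = qzero"
proof -
  define r where "r = norm x"
  define t where "t = fst x / norm x"
  define P0 where "P0 = poly (legendre_der l (Suc n)) t"
  define P1 where "P1 = poly (legendre_der (Suc l) (Suc n)) t"
  define P2 where "P2 = poly (legendre_der (Suc (Suc l)) (Suc n)) t"
  have r: "r > 0" using assms by (simp add: r_def)
  have ode: "(1 - t\<^sup>2) * P2 = 2 * (real l + 1) * t * P1 - (real (Suc n) * (real (Suc n) + 1) - real l * (real l + 1)) * P0"
    unfolding P0_def P1_def P2_def by (rule poly_legendre_der_ode)
  note F = Dbar_Phi_coefficient1[OF r ode, of A]
  note G = Dbar_Phi_coefficient2[OF r ode, of A]
  note D0 = sph_term_deriv_unit_dir0[OF assms, folded t_def, folded r_def]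
  note D12 = sph_term_deriv_unit_dir12[OF assms, folded t_def, folded r_def]
  show ?thesis
    unfolding Dbar_cquat[OF pdiff_Phi[OF assms] pdiff_Phi[OF assms] pdiff_Phi[OF assms]] D0 D12
    unfolding pderiv_legendre_der P0_def[symmetric] P1_def[symmetric] P2_def[symmetric]
    unfolding of_real_diff[symmetric] left_diff_distrib[symmetric] of_real_add[symmetric] distrib_right[symmetric]
    unfolding F G qzero_eq_cquat
    by simp
qed

lemma pdiff0_Phi:
  assumes "x \<noteq> 0"
  shows "pdiff 0 (Phi A n l) x = Phi (- A * (real (Suc n) - real l)) (Suc n) l x"
proof -
  define r where "r = norm x"
  define t where "t = fst x / norm x"
  define P0 where "P0 = poly (legendre_der l (Suc n)) t"
  define P1 where "P1 = poly (legendre_der (Suc l) (Suc n)) t"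
  define P2 where "P2 = poly (legendre_der (Suc (Suc l)) (Suc n)) t"
  define Q0 where "Q0 = poly (legendre_der l (Suc (Suc n))) t"
  define Q1 where "Q1 = poly (legendre_der (Suc l) (Suc (Suc n))) t"
  have r: "r > 0" using assms by (simp add: r_def)
  have L0: "- real (n + l + 2) * t * P0 + (1 - t\<^sup>2) * P1 = (real l - real (Suc n) - 1) * Q0"
    using poly_legendre_der_lowering[of t l "Suc n"] by (simp add: P0_def P1_def Q0_def algebra_simps)
  have L1: "- real (n + l + 3) * t * P1 + (1 - t\<^sup>2) * P2 = (real (Suc l) - real (Suc n) - 1) * Q1"
    using poly_legendre_der_lowering[of t "Suc l" "Suc n"] by (simp add: P1_def P2_def Q1_def algebra_simps)
  have F: "A * (real (Suc n) - real l) / r ^ (n + l + 2 + 1) * (- real (n + l + 2) * t * P0 + (1 - t\<^sup>2) * P1)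
      = - A * (real (Suc n) - real l) * (real (Suc (Suc n)) - real l) / r ^ (Suc n + l + 2) * Q0"
    unfolding L0 using r by (simp add: field_simps)
  have G: "- A / r ^ (n + l + 3 + 1) * (- real (n + l + 3) * t * P1 + (1 - t\<^sup>2) * P2)
      = - (- A * (real (Suc n) - real l)) / r ^ (Suc n + l + 3) * Q1"
    unfolding L1 using r by (simp add: field_simps)
  note D0 = sph_term_deriv_unit_dir0[OF assms, folded t_def, folded r_def]
  show ?thesis
    unfolding pdiff_Phi[OF assms] D0 pderiv_legendre_der P0_def[symmetric] P1_def[symmetric] P2_def[symmetric] F G
    unfolding Phi_def sph_term_def t_def[symmetric]
    unfolding r_def[symmetric] Q0_def[symmetric] Q1_def[symmetric]
    by (simp add: mult_ac)
qed

lemma hderiv_Phi: "x \<noteq> 0 \<Longrightarrow> hderiv (Phi A n l) x = Phi (- A * (real (Suc n) - real l)) (Suc n) l x"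
  by (simp add: hderiv_eq_pdiff0_if_Dbar_zero Dbar_Phi pdiff0_Phi)

lemma monogenic_Phi: "monogenic_on (UNIV - {0}) (Phi A n l)"
  unfolding monogenic_on_def
proof (intro conjI ballI)
  show "open (UNIV - {0 :: pt})" by (simp add: open_Diff)
next
  fix x :: pt
  assume "x \<in> UNIV - {0}"
  hence x: "x \<noteq> 0" by simp
  have F: "sph_term (A * (real (Suc n) - real l)) (n + l + 2) (legendre_der l (Suc n)) l differentiable (at x)"
    and G: "sph_term (- A) (n + l + 3) (legendre_der (Suc l) (Suc n)) (Suc l) differentiable (at x)"
    by (rule differentiableI[OF sph_term_has_derivative[OF x]])+
  have Re: "(\<lambda>y. Re (f y)) differentiable (at x)" and Im: "(\<lambda>y. Im (f y)) differentiable (at x)"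
    if "f differentiable (at x)" for f :: "pt \<Rightarrow> complex"
    using that by (auto intro: differentiable_compose[OF bounded_linear_imp_differentiable] bounded_linear_Re bounded_linear_Im)
  show "(\<lambda>p. q0 (Phi A n l p)) differentiable (at x)" "(\<lambda>p. q1 (Phi A n l p)) differentiable (at x)"
    "(\<lambda>p. q2 (Phi A n l p)) differentiable (at x)" "(\<lambda>p. q3 (Phi A n l p)) differentiable (at x)"
    unfolding Phi_def cquat_def using Re[OF F] Re[OF G] Im[OF G] differentiable_minus[OF Im[OF F]] by simp_all
  show "Dbar (Phi A n l) x = qzero" by (rule Dbar_Phi[OF x])
qed

section \<open>Normalising constants\<close>

lemma kelvin_coeff_step:
  assumes "l \<le> n"
  shows "kelvin_coeff n l * (real (Suc n) - real l)
     = sqrt (real (2 * n + 1) * real (n - l + 1) * real (n + l + 2) / real (2 * n + 3)) * kelvin_coeff (n + 1) l"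
proof -
  define F1 :: real where "F1 = fact (n - l)"
  define F2 :: real where "F2 = fact (n + l + 1)"
  define a where "a = real (n - l + 1)"
  define b where "b = real (n + l + 2)"
  define Y where "Y = real (2 * n + 1) * F1 * F2 / pi"
  have pos: "a > 0" "b > 0" "F2 > 0" by (simp_all add: a_def b_def F2_def)
  have "(fact (n + 1 - l) :: real) = a * F1"
    using assms by (simp add: a_def F1_def Suc_diff_le)
  moreover have "(fact (n + 1 + l + 1) :: real) = b * F2"
    by (simp add: b_def F2_def algebra_simps)
  ultimately have next_coeff: "kelvin_coeff (n + 1) l = (- 1) ^ l / 2 * sqrt (real (2 * n + 3) * (a * F1) * (b * F2) / pi) / (b * F2)"
    by (simp add: kelvin_coeff_def algebra_simps)
  have "real (2 * n + 1) * a * b / v * (v * (a * F1) * (b * F2) / pi) = (a * b)\<^sup>2 * Y" if "v > 0" for v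
    using that by (simp add: Y_def field_simps power2_eq_square)
  from this[of "real (2 * n + 3)"]
  have "real (2 * n + 1) * a * b / real (2 * n + 3) * (real (2 * n + 3) * (a * F1) * (b * F2) / pi) = (a * b)\<^sup>2 * Y"
    by simp
  hence "sqrt (real (2 * n + 1) * a * b / real (2 * n + 3)) * sqrt (real (2 * n + 3) * (a * F1) * (b * F2) / pi)
      = sqrt ((a * b)\<^sup>2 * Y)"
    by (simp only: real_sqrt_mult[symmetric])
  also have "\<dots> = a * b * sqrt Y"
    using pos by (simp add: real_sqrt_mult)
  finally have sqrt_prod: "sqrt (real (2 * n + 1) * a * b / real (2 * n + 3))
      * sqrt (real (2 * n + 3) * (a * F1) * (b * F2) / pi) = a * b * sqrt Y" .
  have "kelvin_coeff n l * (real (Suc n) - real l) = (- 1) ^ l / 2 * sqrt Y / F2 * a"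
    using assms by (simp add: kelvin_coeff_def Y_def F1_def F2_def a_def)
  also have "\<dots> = (- 1) ^ l / 2 * (a * b * sqrt Y) / (b * F2)"
    using pos by (simp add: field_simps)
  also have "\<dots> = sqrt (real (2 * n + 1) * a * b / real (2 * n + 3)) * kelvin_coeff (n + 1) l"
    unfolding next_coeff sqrt_prod[symmetric] by (simp add: mult_ac)
  finally show ?thesis
    unfolding a_def b_def .
qed

lemma qscale_Phi: "qscale c (Phi A n l x) = Phi (c * A) n l x"
  by (simp add: Phi_def qscale_cquat sph_term_def mult_ac)

lemma hderiv_phi_neg:
  assumes "l \<le> n" "x \<noteq> 0"
  shows "hderiv (phi_neg n l) x =
    qscale (- sqrt (real (2 * n + 1) * real (n - l + 1) * real (n + l + 2) / real (2 * n + 3))) (phi_neg (n + 1) l x)"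
  unfolding phi_neg_eq_Phi hderiv_Phi[OF assms(2)] qscale_Phi
  using kelvin_coeff_step[OF assms(1)] by simp

lemma monogenic_qscale_phi_neg: "monogenic_on (UNIV - {0}) (\<lambda>x. qscale c (phi_neg n l x))"
  unfolding phi_neg_eq_Phi qscale_Phi by (rule monogenic_Phi)

lemma hderiv_primitive_phi_neg:
  assumes "l < n" "x \<noteq> 0"
  shows "hderiv (\<lambda>x. qscale (- sqrt (real (2 * n + 1) / (real (2 * n - 1) * real (n - l) * real (n + l + 1))))
                             (phi_neg (n - 1) l x)) x = phi_neg n l x"
proof -
  obtain m where n: "n = Suc m" using assms(1) by (cases n) auto
  define X where "X = real (2 * m + 3)"
  define Y where "Y = real (2 * m + 1) * real (m - l + 1) * real (m + l + 2)"
  have pos: "X > 0" "Y > 0" using assms(1) by (simp_all add: X_def Y_def n)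
  have c: "real (2 * n + 1) / (real (2 * n - 1) * real (n - l) * real (n + l + 1)) = X / Y"
    using assms(1) by (simp add: X_def Y_def n Suc_diff_le algebra_simps)
  have "- (- sqrt (X / Y) * kelvin_coeff m l) * (real (Suc m) - real l) = sqrt (X / Y) * sqrt (Y / X) * kelvin_coeff n l"
    using kelvin_coeff_step[of l m] assms(1) by (simp add: X_def Y_def n)
  also have "sqrt (X / Y) * sqrt (Y / X) = 1"
    using pos by (simp add: real_sqrt_mult[symmetric])
  finally show ?thesis
    unfolding c
    unfolding phi_neg_eq_Phi qscale_Phi[abs_def] n diff_Suc_1 hderiv_Phi[OF assms(2)] by simp
qed

theorem mainTheorem7:
  shows "(\<forall>n l. l \<le> n \<longrightarrow> (\<forall>x::pt. x \<noteq> 0 \<longrightarrow>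
            hderiv (phi_neg n l) x =
              qscale (- sqrt (real (2 * n + 1) * real (n - l + 1) * real (n + l + 2) / real (2 * n + 3)))
                     (phi_neg (n + 1) l x)))
       \<and> (\<forall>n l. 1 \<le> n \<and> l < n \<longrightarrow>
            (let Pf = (\<lambda>x. qscale (- sqrt (real (2 * n + 1) / (real (2 * n - 1) * real (n - l) * real (n + l + 1))))
                                  (phi_neg (n - 1) l x))
             in monogenic_on (UNIV - {0}) Pf \<and> (\<forall>x::pt. x \<noteq> 0 \<longrightarrow> hderiv Pf x = phi_neg n l x)))"
  unfolding Let_def
  by (intro conjI allI impI monogenic_qscale_phi_neg hderiv_phi_neg hderiv_primitive_phi_neg) simp_all

end
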